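(* Let $G$ be a simple 2-connected plane graph and let $(a,b)$ be an admissible state of $G$. Then $$A(a,b)=\sum_{p}\Big( l(p)(a_p+b_p)^2+2(a_p+b_p)\sum_{v\in p}(b_v-b_p)+\sum_{vv'\in p}(b_v-b_p)(b_{v'}-b_p)\Big)+\sum_{vv'\in p_\infty} b_v b_{v'},$$ where $p$ runs over the bounded faces of $G$, $\sum_{vv'\in p}$ runs over the edges on the boundary of $p$, and $\sum_{vv'\in p_\infty}$ runs over the edges on the boundary of the unbounded face. Every summand on the right-hand side is nonnegative; in particular $A(a,b)\ge 0$.
   Context: A simple 2-connected plane graph $G$ is a simple 2-connected planar graph with a fixed embedding in the plane, so every face is bounded by a cycle. Let $p_\infty$ be the unbounded face. For a face $p$, $l(p)$ is the number of edges on its boundary, $v\in p$ means $v$ is a vertex on the boundary of $p$, and $vv'\in p$ means $vv'$ is an edge on the boundary of $p$. A boundary vertex is a vertex on $p_\infty$. An admissible state $(a,b)$ assigns an integer $a_p$ to each bounded face $p$ and an integer $b_v$ to each vertex $v$ such that $a_p+b_v\ge 0$ whenever $p$ is bounded and $v\in p$, and $b_v\ge 0$ for every boundary vertex $v$ (one sets $a_{p_\infty}=0$). For a bounded face $p$, $b_p=\min_{v\in p} b_v$. Define $$A(a,b)=\sum_{p}\Big(l(p)a_p^2+2a_p\sum_{v\in p}b_v\Big)+2\sum_{vv'\in E(G)} b_vb_{v'},\qquad B(a,b)=2\sum_{v}b_v+\sum_p (l(p)-2)a_p,$$ where $p$ runs over the bounded faces, $v$ over all vertices, and the last sum in $A$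 over all edges of $G$. *)

theory Defs
  imports Main "HOL-Combinatorics.Orbits"
begin

definition simple_graph :: "'v set \<Rightarrow> 'v set set \<Rightarrow> bool" where
  "simple_graph V E \<longleftrightarrow> finite V \<and>
     E \<subseteq> {{u, w} | u w. u \<in> V \<and> w \<in> V \<and> u \<noteq> w}"

definition adj_rel :: "'v set \<Rightarrow> 'v set set \<Rightarrow> ('v \<times> 'v) set" where
  "adj_rel V E = {(u, w). u \<in> V \<and> w \<in> V \<and> {u, w} \<in> E}"

definition connected_graph :: "'v set \<Rightarrow> 'v set set \<Rightarrow> bool" where
  "connected_graph V E \<longleftrightarrow> V \<noteq> {} \<and> (\<forall>u\<in>V. \<forall>w\<in>V. (u, w) \<in> (adj_rel V E)\<^sup>*)"

definition two_connected :: "'v set \<Rightarrow> 'v set set \<Rightarrow> bool" where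
  "two_connected V E \<longleftrightarrow> card V \<ge> 3 \<and> connected_graph V E \<and>
     (\<forall>x\<in>V. connected_graph (V - {x}) {e \<in> E. x \<notin> e})"

definition nbrs :: "'v set set \<Rightarrow> 'v \<Rightarrow> 'v set" where
  "nbrs E v = {w. {v, w} \<in> E}"

definition darts :: "'v set set \<Rightarrow> ('v \<times> 'v) set" where
  "darts E = {(u, w). {u, w} \<in> E}"

text \<open>A rotation system assigns to each vertex a cyclic permutation of its neighbours
  (the clockwise order of incident edges in the embedding). Faces are the orbits of the
  face-tracing map on darts.\<close>

definition rotation_system :: "'v set \<Rightarrow> 'v set set \<Rightarrow> ('v \<Rightarrow> 'v \<Rightarrow> 'v) \<Rightarrow> bool" where
  "rotation_system V E rot \<longleftrightarrow>
     (\<forall>v\<in>V. bij_betw (rot v) (nbrs E v) (nbrs E v) \<and> cyclic_on (rot v) (nbrs E v))"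

definition face_succ :: "('v \<Rightarrow> 'v \<Rightarrow> 'v) \<Rightarrow> 'v \<times> 'v \<Rightarrow> 'v \<times> 'v" where
  "face_succ rot d = (snd d, rot (snd d) (fst d))"

definition faces :: "'v set set \<Rightarrow> ('v \<Rightarrow> 'v \<Rightarrow> 'v) \<Rightarrow> ('v \<times> 'v) set set" where
  "faces E rot = {orbit (face_succ rot) d | d. d \<in> darts E}"

text \<open>The embedding is on the sphere (equivalently, in the plane) iff Euler's formula holds.\<close>
definition plane_graph :: "'v set \<Rightarrow> 'v set set \<Rightarrow> ('v \<Rightarrow> 'v \<Rightarrow> 'v) \<Rightarrow> bool" where
  "plane_graph V E rot \<longleftrightarrow> simple_graph V E \<and> connected_graph V E \<and>
     rotation_system V E rot \<and>
     int (card V) - int (card E) + int (card (faces E rot)) = 2"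

definition face_verts :: "('v \<times> 'v) set \<Rightarrow> 'v set" where
  "face_verts p = fst ` p"

definition face_edges :: "('v \<times> 'v) set \<Rightarrow> 'v set set" where
  "face_edges p = (\<lambda>(u, w). {u, w}) ` p"

definition face_len :: "('v \<times> 'v) set \<Rightarrow> nat" where
  "face_len p = card (face_edges p)"

text \<open>The boundary walk of a face visits no vertex twice, i.e. the face is bounded by a cycle.\<close>
definition face_is_cycle :: "('v \<times> 'v) set \<Rightarrow> bool" where
  "face_is_cycle p \<longleftrightarrow> inj_on fst p"

definition admissible ::
  "('v \<times> 'v) set set \<Rightarrow> ('v \<times> 'v) set \<Rightarrow> (('v \<times> 'v) set \<Rightarrow> int) \<Rightarrow> ('v \<Rightarrow> int) \<Rightarrow> bool" where
  "admissible F pinf a b \<longleftrightarrow>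
     (\<forall>p\<in>F - {pinf}. \<forall>v\<in>face_verts p. a p + b v \<ge> 0) \<and>
     (\<forall>v\<in>face_verts pinf. b v \<ge> 0)"

definition face_min :: "('v \<Rightarrow> int) \<Rightarrow> ('v \<times> 'v) set \<Rightarrow> int" where
  "face_min b p = Min (b ` face_verts p)"

definition A_form ::
  "'v set set \<Rightarrow> ('v \<times> 'v) set set \<Rightarrow> ('v \<times> 'v) set \<Rightarrow> (('v \<times> 'v) set \<Rightarrow> int) \<Rightarrow> ('v \<Rightarrow> int) \<Rightarrow> int" where
  "A_form E F pinf a b =
     (\<Sum>p\<in>F - {pinf}. int (face_len p) * (a p)\<^sup>2 + 2 * a p * (\<Sum>v\<in>face_verts p. b v))
     + 2 * (\<Sum>e\<in>E. \<Prod>v\<in>e. b v)"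

end

theory Submission
  imports Defs
begin

text \<open>
  The identity holds face by face. A face is an orbit of the face-successor map on darts, and
  the successor of a dart starts where the dart ends, so summing \<open>b\<close> over the tails or
  over the heads of the darts of a face gives the same value. As the boundary of a face is a
  cycle traversed in one direction, its vertices, edges and darts correspond bijectively, and
  expanding the square in \<open>a p + b\<^sub>p\<close> recovers the share of the face in \<open>A\<close>.
  The faces partition the darts and every edge carries two darts, so the edge terms of all
  faces, the unbounded one included, add up to twice the edge sum in \<open>A\<close>.
  Nonnegativity is termwise: admissibility gives \<open>a p + b\<^sub>p \<ge> 0\<close> and minimality gives
  \<open>b v - b\<^sub>p \<ge> 0\<close>.
\<close>

lemma inj_on_endo_self_in_orbit:
  assumes "finite D" "inj_on f D" "f ` D \<subseteq> D" "x \<in> D"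
  shows "x \<in> orbit f x"
proof -
  define g where "g = (\<lambda>y. if y \<in> D then f y else y)"
  have "f ` D = D" using assms endo_inj_surj by blast
  then have "bij_betw f D D" using assms(2) by (simp add: bij_betw_def)
  then have "bij_betw g D D"
    by (rule bij_betw_cong[THEN iffD1, rotated]) (simp add: g_def)
  then have "g permutes D"
    by (rule bij_imp_permutes) (simp add: g_def)
  then have "permutation g" using assms(1) permutation_permutes by blast
  then have "x \<in> orbit g x" by (rule permutation_self_in_orbit)
  moreover have "orbit f x = orbit g x"
    using assms(3,4) by (intro orbit_cong0[of x D]) (auto simp: g_def)
  ultimately show ?thesis by simp
qed

lemma orbit_eq_if_self_in_orbit:
  assumes "x \<in> orbit f x" "y \<in> orbit f x"
  shows "orbit f y = orbit f x"
proof
  show "orbit f y \<subseteq> orbit f x" using assms(2) orbit_trans by fast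
  have "x \<in> orbit f y" using orbit_swap[OF assms] .
  then show "orbit f x \<subseteq> orbit f y" using orbit_trans by fast
qed

lemma sum_completed_square_shift:
  fixes x y :: "'d \<Rightarrow> 'a::comm_ring_1" and a m :: 'a
  assumes "(\<Sum>d\<in>P. y d) = (\<Sum>d\<in>P. x d)"
  shows "of_nat (card P) * (a + m)\<^sup>2 + 2 * (a + m) * (\<Sum>d\<in>P. x d - m)
           + (\<Sum>d\<in>P. (x d - m) * (y d - m))
         = of_nat (card P) * a\<^sup>2 + 2 * a * (\<Sum>d\<in>P. x d) + (\<Sum>d\<in>P. x d * y d)"
proof -
  have cross: "(\<Sum>d\<in>P. (x d - m) * (y d - m))
      = (\<Sum>d\<in>P. x d * y d) - m * (\<Sum>d\<in>P. x d) - m * (\<Sum>d\<in>P. y d) + of_nat (card P) * m\<^sup>2"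
    by (simp add: algebra_simps sum.distrib sum_subtractf sum_distrib_left power2_eq_square)
  have linear: "(\<Sum>d\<in>P. x d - m) = (\<Sum>d\<in>P. x d) - of_nat (card P) * m"
    by (simp add: sum_subtractf)
  show ?thesis
    unfolding cross linear assms by (simp add: algebra_simps power2_eq_square)
qed

definition dart_edge :: "'v \<times> 'v \<Rightarrow> 'v set" where
  "dart_edge d = {fst d, snd d}"

lemma face_edges_eq_image_dart_edge: "face_edges p = dart_edge ` p"
  unfolding face_edges_def dart_edge_def by (intro image_cong refl) auto

lemma dart_iff_nbrs: "(u, w) \<in> darts E \<longleftrightarrow> u \<in> nbrs E w"
  by (simp add: darts_def nbrs_def insert_commute)

locale cycle_faced_rotation_system =
  fixes V :: "'v set" and E :: "'v set set" and rot :: "'v \<Rightarrow> 'v \<Rightarrow> 'v"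
  assumes simple: "simple_graph V E"
    and rotation: "rotation_system V E rot"
    and two_conn: "two_connected V E"
    and faces_cycles: "\<forall>p\<in>faces E rot. face_is_cycle p"
begin

lemma edge_obtain:
  assumes "e \<in> E"
  obtains u w where "e = {u, w}" "u \<in> V" "w \<in> V" "u \<noteq> w"
proof -
  have "E \<subseteq> {{u, w} | u w. u \<in> V \<and> w \<in> V \<and> u \<noteq> w}"
    using simple by (simp add: simple_graph_def)
  then show ?thesis using assms that by auto
qed

lemma finite_vertices: "finite V"
  using simple by (simp add: simple_graph_def)

lemma finite_edges: "finite E"
proof -
  have "E \<subseteq> Pow V" by (auto elim: edge_obtain)
  then show ?thesis using finite_vertices finite_subset by blast
qed

lemma dart_ends:
  assumes "d \<in> darts E"
  shows "fst d \<in> V" "snd d \<in> V" "fst d \<noteq> snd d"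
proof -
  have "{fst d, snd d} \<in> E" using assms by (auto simp: darts_def)
  then obtain u w where "{fst d, snd d} = {u, w}" "u \<in> V" "w \<in> V" "u \<noteq> w"
    by (rule edge_obtain)
  then show "fst d \<in> V" "snd d \<in> V" "fst d \<noteq> snd d" by (auto simp: doubleton_eq_iff)
qed

lemma finite_darts: "finite (darts E)"
proof -
  have "darts E \<subseteq> V \<times> V" using dart_ends by force
  then show ?thesis using finite_vertices finite_subset by blast
qed

lemma rot_bij: "w \<in> V \<Longrightarrow> bij_betw (rot w) (nbrs E w) (nbrs E w)"
  using rotation by (simp add: rotation_system_def)

lemma face_succ_image_darts: "face_succ rot ` darts E \<subseteq> darts E"
proof
  fix x assume "x \<in> face_succ rot ` darts E"
  then obtain u w where d: "(u, w) \<in> darts E" "x = face_succ rot (u, w)" by auto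
  then have "rot w u \<in> nbrs E w"
    using rot_bij[of w] dart_ends(2)[OF d(1)] dart_iff_nbrs bij_betwE by fastforce
  then show "x \<in> darts E" using d(2) by (simp add: face_succ_def darts_def nbrs_def)
qed

lemma inj_on_face_succ_darts: "inj_on (face_succ rot) (darts E)"
proof
  fix x y assume x: "x \<in> darts E" and y: "y \<in> darts E"
    and eq: "face_succ rot x = face_succ rot y"
  obtain u w u' w' where xy: "x = (u, w)" "y = (u', w')" by force
  have w: "w' = w" using eq xy by (simp add: face_succ_def)
  have r: "rot w u = rot w u'" using eq xy w by (simp add: face_succ_def)
  have "inj_on (rot w) (nbrs E w)"
    using rot_bij[of w] dart_ends(2)[OF x] xy by (simp add: bij_betw_def)
  moreover have "u \<in> nbrs E w" "u' \<in> nbrs E w"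
    using x y xy w by (simp_all add: dart_iff_nbrs)
  ultimately have "u = u'" using r by (meson inj_onD)
  then show "x = y" using xy w by simp
qed

lemma self_in_face_orbit: "d \<in> darts E \<Longrightarrow> d \<in> orbit (face_succ rot) d"
  using inj_on_endo_self_in_orbit[OF finite_darts inj_on_face_succ_darts face_succ_image_darts] .

lemma face_orbit_subset_darts:
  assumes "d \<in> darts E"
  shows "orbit (face_succ rot) d \<subseteq> darts E"
proof
  fix x assume "x \<in> orbit (face_succ rot) d"
  then show "x \<in> darts E" by induct (use assms face_succ_image_darts in auto)
qed

context
  fixes p assumes p: "p \<in> faces E rot"
begin

lemma face_subset_darts: "p \<subseteq> darts E"
  using p face_orbit_subset_darts by (auto simp: faces_def)

lemma finite_face: "finite p"
  using face_subset_darts finite_darts finite_subset by blast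

lemma face_nonempty: "p \<noteq> {}"
proof -
  obtain d where "p = orbit (face_succ rot) d" using p unfolding faces_def by blast
  then show ?thesis using orbit_nonempty by simp
qed

lemma inj_on_face_succ_face: "inj_on (face_succ rot) p"
  using inj_on_face_succ_darts face_subset_darts inj_on_subset by blast

lemma face_succ_image_face: "face_succ rot ` p = p"
proof -
  have "face_succ rot ` p \<subseteq> p" using p by (auto simp: faces_def intro: orbit.step)
  then show ?thesis using endo_inj_surj finite_face inj_on_face_succ_face by blast
qed

lemma inj_on_fst_face: "inj_on fst p"
  using faces_cycles p by (simp add: face_is_cycle_def)

lemma snd_in_face_verts: "d \<in> p \<Longrightarrow> snd d \<in> face_verts p"
  using face_succ_image_face by (force simp: face_verts_def face_succ_def)

lemma face_edge_subset_verts: "e \<in> face_edges p \<Longrightarrow> e \<subseteq> face_verts p"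
  using snd_in_face_verts
  by (force simp: face_edges_eq_image_dart_edge dart_edge_def face_verts_def)

lemma finite_face_verts: "finite (face_verts p)"
  using finite_face by (simp add: face_verts_def)

lemma face_verts_nonempty: "face_verts p \<noteq> {}"
  using face_nonempty by (simp add: face_verts_def)

end

lemma finite_faces: "finite (faces E rot)"
proof -
  have "faces E rot = orbit (face_succ rot) ` darts E" by (auto simp: faces_def)
  then show ?thesis using finite_darts by simp
qed

lemma Union_faces: "\<Union>(faces E rot) = darts E"
proof
  show "\<Union>(faces E rot) \<subseteq> darts E" using face_subset_darts by blast
  show "darts E \<subseteq> \<Union>(faces E rot)"
    using self_in_face_orbit by (auto simp: faces_def)
qed

lemma faces_disjoint:
  assumes "p \<in> faces E rot" "q \<in> faces E rot" "p \<noteq> q"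
  shows "p \<inter> q = {}"
proof (rule ccontr)
  assume "p \<inter> q \<noteq> {}"
  then obtain z where z: "z \<in> p" "z \<in> q" by blast
  have "orbit (face_succ rot) z = r" if r: "r \<in> faces E rot" and z: "z \<in> r" for r
  proof -
    obtain d where "d \<in> darts E" "r = orbit (face_succ rot) d"
      using r unfolding faces_def by blast
    then show ?thesis using orbit_eq_if_self_in_orbit[OF self_in_face_orbit] z by simp
  qed
  then show False using assms z by metis
qed

lemma no_degree_one_vertex:
  assumes w: "w \<in> V" and nbrs: "nbrs E w = {u}"
  shows False
proof -
  have "{w, u} \<in> E" using nbrs by (auto simp: nbrs_def)
  then have "u \<in> V" "u \<noteq> w" by (auto elim!: edge_obtain simp: doubleton_eq_iff)
  have conn: "connected_graph (V - {u}) {e \<in> E. u \<notin> e}"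
    using two_conn \<open>u \<in> V\<close> by (simp add: two_connected_def)
  have "card V \<ge> 3" using two_conn by (simp add: two_connected_def)
  then have "card (V - {u}) \<ge> 2" using \<open>u \<in> V\<close> finite_vertices by simp
  then have "\<not> V - {u} \<subseteq> {w}"
    using card_mono[of "{w}" "V - {u}"] by auto
  then obtain x where x: "x \<in> V - {u}" "x \<noteq> w" by blast
  have "(w, x) \<in> (adj_rel (V - {u}) {e \<in> E. u \<notin> e})\<^sup>*"
    using conn x w \<open>u \<noteq> w\<close> by (simp add: connected_graph_def)
  then show False
    by (rule converse_rtranclE) (use x nbrs in \<open>auto simp: adj_rel_def nbrs_def\<close>)
qed

lemma face_no_reversed_dart:
  assumes p: "p \<in> faces E rot" and d: "(u, w) \<in> p" "(w, u) \<in> p"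
  shows False
proof -
  have "(w, rot w u) \<in> p"
    using face_succ_image_face[OF p] d(1) by (force simp: face_succ_def)
  then have fixpoint: "rot w u = u"
    using inj_on_fst_face[OF p] d(2) by (metis fst_conv inj_onD prod.inject)
  have "(u, w) \<in> darts E" using face_subset_darts[OF p] d(1) by blast
  then have "w \<in> V" "u \<in> nbrs E w" using dart_ends dart_iff_nbrs by force+
  then have "orbit (rot w) u = nbrs E w"
    using rotation by (intro orbit_cyclic_eq3) (simp_all add: rotation_system_def)
  then have "nbrs E w = {u}" using fixpoint orbit_eq_singleton_iff by metis
  then show False using no_degree_one_vertex \<open>w \<in> V\<close> by blast
qed

lemma inj_on_dart_edge_face:
  assumes p: "p \<in> faces E rot"
  shows "inj_on dart_edge p"
proof
  fix x y assume x: "x \<in> p" and y: "y \<in> p" and eq: "dart_edge x = dart_edge y"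
  obtain u w u' w' where xy: "x = (u, w)" "y = (u', w')" by force
  have "(u = u' \<and> w = w') \<or> (u = w' \<and> w = u')"
    using eq xy by (simp add: dart_edge_def doubleton_eq_iff)
  then show "x = y" using face_no_reversed_dart[OF p] x y xy by auto
qed

lemma face_len_eq_card:
  "p \<in> faces E rot \<Longrightarrow> face_len p = card p"
  using inj_on_dart_edge_face by (simp add: face_len_def face_edges_eq_image_dart_edge card_image)

lemma sum_face_verts:
  "p \<in> faces E rot \<Longrightarrow> (\<Sum>v\<in>face_verts p. g v) = (\<Sum>d\<in>p. g (fst d))"
  using inj_on_fst_face by (simp add: face_verts_def sum.reindex)

lemma sum_face_edges:
  "p \<in> faces E rot \<Longrightarrow> (\<Sum>e\<in>face_edges p. h e) = (\<Sum>d\<in>p. h (dart_edge d))"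
  using inj_on_dart_edge_face by (simp add: face_edges_eq_image_dart_edge sum.reindex)

lemma sum_face_snd_eq_sum_fst:
  assumes p: "p \<in> faces E rot"
  shows "(\<Sum>d\<in>p. g (snd d)) = (\<Sum>d\<in>p. g (fst d))"
proof -
  have "(\<Sum>d\<in>p. g (snd d)) = (\<Sum>d\<in>p. g (fst (face_succ rot d)))"
    by (simp add: face_succ_def)
  also have "\<dots> = (\<Sum>d\<in>face_succ rot ` p. g (fst d))"
    using inj_on_face_succ_face[OF p] by (simp add: sum.reindex)
  finally show ?thesis using face_succ_image_face[OF p] by simp
qed

lemma face_completed_square:
  fixes b :: "'v \<Rightarrow> int"
  assumes p: "p \<in> faces E rot"
  shows "int (face_len p) * (a + m)\<^sup>2 + 2 * (a + m) * (\<Sum>v\<in>face_verts p. b v - m)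
           + (\<Sum>e\<in>face_edges p. \<Prod>v\<in>e. b v - m)
         = int (face_len p) * a\<^sup>2 + 2 * a * (\<Sum>v\<in>face_verts p. b v)
           + (\<Sum>e\<in>face_edges p. \<Prod>v\<in>e. b v)"
proof -
  have prod_edge: "(\<Prod>v\<in>dart_edge d. h v) = h (fst d) * h (snd d)"
    if "d \<in> p" for d and h :: "'v \<Rightarrow> int"
    using dart_ends(3) face_subset_darts[OF p] that by (auto simp: dart_edge_def)
  show ?thesis
    unfolding face_len_eq_card[OF p] sum_face_verts[OF p] sum_face_edges[OF p]
    using sum_completed_square_shift[OF sum_face_snd_eq_sum_fst[OF p, of b], of a m]
    by (simp add: prod_edge cong: sum.cong)
qed

lemma sum_faces_face_edges:
  "(\<Sum>p\<in>faces E rot. \<Sum>e\<in>face_edges p. h e) = (\<Sum>d\<in>darts E. h (dart_edge d))"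
proof -
  have "(\<Sum>p\<in>faces E rot. \<Sum>e\<in>face_edges p. h e) = (\<Sum>p\<in>faces E rot. \<Sum>d\<in>p. h (dart_edge d))"
    using sum_face_edges by (intro sum.cong) auto
  also have "\<dots> = (\<Sum>d\<in>\<Union>(faces E rot). h (dart_edge d))"
    using finite_face faces_disjoint by (subst sum.Union_disjoint) auto
  finally show ?thesis using Union_faces by simp
qed

lemma sum_darts_dart_edge:
  fixes h :: "'v set \<Rightarrow> 'a::comm_semiring_1"
  shows "(\<Sum>d\<in>darts E. h (dart_edge d)) = 2 * (\<Sum>e\<in>E. h e)"
proof -
  have "dart_edge ` darts E \<subseteq> E" by (auto simp: dart_edge_def darts_def)
  then have "(\<Sum>d\<in>darts E. h (dart_edge d))
      = (\<Sum>e\<in>E. \<Sum>d\<in>{d \<in> darts E. dart_edge d = e}. h (dart_edge d))"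
    using finite_darts finite_edges by (intro sum.group[symmetric])
  also have "\<dots> = (\<Sum>e\<in>E. 2 * h e)"
  proof (intro sum.cong refl)
    fix e assume "e \<in> E"
    then obtain u w where e: "e = {u, w}" "u \<noteq> w" by (rule edge_obtain)
    have "{d \<in> darts E. dart_edge d = e} = {(u, w), (w, u)}"
      using e \<open>e \<in> E\<close> by (auto simp: dart_edge_def darts_def doubleton_eq_iff insert_commute)
    then show "(\<Sum>d\<in>{d \<in> darts E. dart_edge d = e}. h (dart_edge d)) = 2 * h e"
      using e by (simp add: dart_edge_def insert_commute mult_2)
  qed
  finally show ?thesis by (simp add: sum_distrib_left)
qed

lemma A_form_face_decomposition:
  assumes outer: "pinf \<in> faces E rot"
  shows "A_form E (faces E rot) pinf a b =
      (\<Sum>p\<in>faces E rot - {pinf}.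
          int (face_len p) * (a p + face_min b p)\<^sup>2
        + 2 * (a p + face_min b p) * (\<Sum>v\<in>face_verts p. b v - face_min b p)
        + (\<Sum>e\<in>face_edges p. \<Prod>v\<in>e. b v - face_min b p))
      + (\<Sum>e\<in>face_edges pinf. \<Prod>v\<in>e. b v)"
proof -
  let ?edges = "\<lambda>p. \<Sum>e\<in>face_edges p. \<Prod>v\<in>e. b v"
  have "2 * (\<Sum>e\<in>E. \<Prod>v\<in>e. b v) = (\<Sum>p\<in>faces E rot. ?edges p)"
    using sum_faces_face_edges sum_darts_dart_edge by metis
  also have "\<dots> = (\<Sum>p\<in>faces E rot - {pinf}. ?edges p) + ?edges pinf"
    using sum.remove[OF finite_faces outer] by (simp add: add.commute)
  finally have edges: "2 * (\<Sum>e\<in>E. \<Prod>v\<in>e. b v)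
      = (\<Sum>p\<in>faces E rot - {pinf}. ?edges p) + ?edges pinf" .
  have "(\<Sum>p\<in>faces E rot - {pinf}.
          int (face_len p) * (a p + face_min b p)\<^sup>2
        + 2 * (a p + face_min b p) * (\<Sum>v\<in>face_verts p. b v - face_min b p)
        + (\<Sum>e\<in>face_edges p. \<Prod>v\<in>e. b v - face_min b p))
      = (\<Sum>p\<in>faces E rot - {pinf}.
          int (face_len p) * (a p)\<^sup>2 + 2 * a p * (\<Sum>v\<in>face_verts p. b v) + ?edges p)"
    by (intro sum.cong refl face_completed_square) simp
  then show ?thesis
    unfolding A_form_def edges by (simp add: sum.distrib)
qed

lemma face_min_le: "p \<in> faces E rot \<Longrightarrow> v \<in> face_verts p \<Longrightarrow> face_min b p \<le> b v"
  unfolding face_min_def using finite_face_verts by simp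

lemma face_min_attained:
  assumes "p \<in> faces E rot"
  obtains v where "v \<in> face_verts p" "face_min b p = b v"
proof -
  have "face_min b p \<in> b ` face_verts p" unfolding face_min_def
    using assms finite_face_verts face_verts_nonempty by (intro Min_in) auto
  then show ?thesis using that by blast
qed

lemma bounded_face_terms_nonneg:
  assumes adm: "admissible (faces E rot) pinf a b" and p: "p \<in> faces E rot - {pinf}"
  shows "0 \<le> int (face_len p) * (a p + face_min b p)\<^sup>2"
    and "0 \<le> 2 * (a p + face_min b p) * (\<Sum>v\<in>face_verts p. b v - face_min b p)"
    and "\<forall>e\<in>face_edges p. 0 \<le> (\<Prod>v\<in>e. b v - face_min b p)"
proof -
  have pF: "p \<in> faces E rot" using p by simp
  obtain v0 where "v0 \<in> face_verts p" "face_min b p = b v0"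
    using face_min_attained[OF pF] .
  then have "0 \<le> a p + face_min b p" using adm p by (auto simp: admissible_def)
  moreover have "0 \<le> (\<Sum>v\<in>face_verts p. b v - face_min b p)"
    using face_min_le[OF pF] by (intro sum_nonneg) simp
  ultimately show "0 \<le> 2 * (a p + face_min b p) * (\<Sum>v\<in>face_verts p. b v - face_min b p)"
    by simp
  show "0 \<le> int (face_len p) * (a p + face_min b p)\<^sup>2" by simp
  show "\<forall>e\<in>face_edges p. 0 \<le> (\<Prod>v\<in>e. b v - face_min b p)"
    using face_edge_subset_verts[OF pF] face_min_le[OF pF]
    by (fastforce intro: prod_nonneg)
qed

lemma outer_face_terms_nonneg:
  assumes "admissible (faces E rot) pinf a b" "pinf \<in> faces E rot"
  shows "\<forall>e\<in>face_edges pinf. 0 \<le> (\<Prod>v\<in>e. b v)"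
  using assms face_edge_subset_verts by (fastforce simp: admissible_def intro: prod_nonneg)

end

theorem theorem1p2:
  fixes V :: "'v set" and E :: "'v set set" and rot :: "'v \<Rightarrow> 'v \<Rightarrow> 'v"
    and pinf :: "('v \<times> 'v) set"
    and a :: "('v \<times> 'v) set \<Rightarrow> int" and b :: "'v \<Rightarrow> int"
  assumes plane: "plane_graph V E rot"
    and two_conn: "two_connected V E"
    and cyc: "\<forall>p\<in>faces E rot. face_is_cycle p"
    and outer: "pinf \<in> faces E rot"
    and adm: "admissible (faces E rot) pinf a b"
  shows "(A_form E (faces E rot) pinf a b =
      (\<Sum>p\<in>faces E rot - {pinf}.
          int (face_len p) * (a p + face_min b p)\<^sup>2
        + 2 * (a p + face_min b p) * (\<Sum>v\<in>face_verts p. b v - face_min b p)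
        + (\<Sum>e\<in>face_edges p. \<Prod>v\<in>e. b v - face_min b p))
      + (\<Sum>e\<in>face_edges pinf. \<Prod>v\<in>e. b v)) \<and>
    (\<forall>p\<in>faces E rot - {pinf}.
          0 \<le> int (face_len p) * (a p + face_min b p)\<^sup>2 \<and>
          0 \<le> 2 * (a p + face_min b p) * (\<Sum>v\<in>face_verts p. b v - face_min b p) \<and>
          (\<forall>e\<in>face_edges p. 0 \<le> (\<Prod>v\<in>e. b v - face_min b p))) \<and>
    (\<forall>e\<in>face_edges pinf. 0 \<le> (\<Prod>v\<in>e. b v)) \<and>
    0 \<le> A_form E (faces E rot) pinf a b"
proof -
  interpret cycle_faced_rotation_system V E rot
    using plane two_conn cyc by unfold_locales (auto simp: plane_graph_def)
  note decomposition = A_form_face_decomposition[OF outer, of a b]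
  note bounded = bounded_face_terms_nonneg[OF adm]
  note unbounded = outer_face_terms_nonneg[OF adm outer]
  have "0 \<le> A_form E (faces E rot) pinf a b"
    unfolding decomposition using bounded unbounded
    by (intro add_nonneg_nonneg sum_nonneg) (auto intro!: add_nonneg_nonneg sum_nonneg)
  then show ?thesis using decomposition bounded unbounded by blast
qed

end
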